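(* Every partial Steiner triple system of order $n$ has a cyclically $\ell$-good sequencing for each positive integer $\ell \leq 0.0908\, n^{1/2}$.
   Context: A partial Steiner triple system of order $n$ is a pair $(X,\mathcal{B})$ where $X$ is an $n$-set of vertices ($n\ge 3$) and $\mathcal{B}$ is a collection of $3$-subsets of $X$ (blocks) such that each $2$-subset of $X$ is contained in at most one block. An independent set is a subset $Y\subseteq X$ containing no block. Let $\mathbb{Z}_n=\{0,\ldots,n-1\}$ be the cyclic group of order $n$. A sequencing is a bijection $\varphi:\mathbb{Z}_n\to X$. A set $S\subseteq X$ is cyclically consecutive if $S=\{\varphi(i),\varphi(i+1),\ldots,\varphi(i+|S|-1)\}$ for some $i\in\mathbb{Z}_n$ (addition in $\mathbb{Z}_n$). For a positive integer $\ell$, a sequencing is cyclically $\ell$-good if every set of $\ell$ cyclically consecutive vertices is an independent set. *)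

theory Defs
  imports Complex_Main
begin

definition partial_STS :: "'a set \<Rightarrow> 'a set set \<Rightarrow> bool" where
  "partial_STS X \<B> \<longleftrightarrow> finite X \<and> card X \<ge> 3 \<and>
     (\<forall>b\<in>\<B>. b \<subseteq> X \<and> card b = 3) \<and>
     (\<forall>P. P \<subseteq> X \<and> card P = 2 \<longrightarrow> card {b\<in>\<B>. P \<subseteq> b} \<le> 1)"

definition independent_set :: "'a set set \<Rightarrow> 'a set \<Rightarrow> bool" where
  "independent_set \<B> Y \<longleftrightarrow> (\<forall>b\<in>\<B>. \<not> b \<subseteq> Y)"

definition sequencing :: "'a set \<Rightarrow> (nat \<Rightarrow> 'a) \<Rightarrow> bool" where
  "sequencing X \<phi> \<longleftrightarrow> bij_betw \<phi> {0..<card X} X"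

definition cyc_window :: "nat \<Rightarrow> (nat \<Rightarrow> 'a) \<Rightarrow> nat \<Rightarrow> nat \<Rightarrow> 'a set" where
  "cyc_window n \<phi> i l = {\<phi> ((i + j) mod n) | j. j < l}"

definition cyclically_good :: "'a set \<Rightarrow> 'a set set \<Rightarrow> nat \<Rightarrow> (nat \<Rightarrow> 'a) \<Rightarrow> bool" where
  "cyclically_good X \<B> l \<phi> \<longleftrightarrow> sequencing X \<phi> \<and>
     (\<forall>i < card X. independent_set \<B> (cyc_window (card X) \<phi> i l))"

end

theory Submission
  imports Defs "HOL-Library.FuncSet"
begin

(* Pick a sequencing uniformly at random. It fails to be cyclically l-good only if some block b
   lies in a window of l cyclically consecutive positions, i.e. if for some injective placement
   g of b into a window every x in b sits at position g x. Such a placement event has probability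
   1/(n(n-1)(n-2)), and it is negatively correlated with every family of placement events that
   share neither a vertex nor a position with it, because a permutation of X realising any
   prescribed images of b can be chosen to fix everything it does not have to move. At most
   6n(n-1)(2l-1)^2 events share a vertex or a position with a given one, so the lopsided local
   lemma applies once 24(2l-1)^2 <= n - 2, which holds for l <= 0.0908 sqrt n. *)

section \<open>A counting form of the lopsided local lemma\<close>

definition avoiding :: "'s set \<Rightarrow> ('e \<Rightarrow> 's set) \<Rightarrow> 'e set \<Rightarrow> 's set" where
  "avoiding \<Omega> A S = {s \<in> \<Omega>. \<forall>j\<in>S. s \<notin> A j}"

lemma avoiding_antimono: "S \<subseteq> T \<Longrightarrow> avoiding \<Omega> A T \<subseteq> avoiding \<Omega> A S"
  unfolding avoiding_def by auto

lemma avoiding_insert: "avoiding \<Omega> A (insert j S) = avoiding \<Omega> A S - A j \<inter> avoiding \<Omega> A S"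
  unfolding avoiding_def by auto

lemma finite_avoiding: "finite \<Omega> \<Longrightarrow> finite (avoiding \<Omega> A S)"
  unfolding avoiding_def by simp

lemma card_avoiding_insert:
  assumes "finite \<Omega>"
  shows "card (avoiding \<Omega> A S) = card (avoiding \<Omega> A (insert j S)) + card (A j \<inter> avoiding \<Omega> A S)"
proof -
  have "card (avoiding \<Omega> A (insert j S)) = card (avoiding \<Omega> A S) - card (A j \<inter> avoiding \<Omega> A S)"
    unfolding avoiding_insert using assms by (intro card_Diff_subset) (auto simp: finite_avoiding)
  moreover have "card (A j \<inter> avoiding \<Omega> A S) \<le> card (avoiding \<Omega> A S)"
    using assms by (intro card_mono) (auto simp: finite_avoiding)
  ultimately show ?thesis by simp
qed

lemma card_avoiding_union:
  assumes "finite \<Omega>" and "finite T"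
    and bound: "\<And>j T'. T' \<subseteq> T \<Longrightarrow> j \<in> T \<Longrightarrow> j \<notin> T' \<Longrightarrow>
      card (A j \<inter> avoiding \<Omega> A (S \<union> T')) * m \<le> 2 * card (avoiding \<Omega> A (S \<union> T'))"
  shows "m * card (avoiding \<Omega> A S) \<le> m * card (avoiding \<Omega> A (S \<union> T)) + 2 * card T * card (avoiding \<Omega> A S)"
  using \<open>finite T\<close> bound
proof (induction T rule: finite_induct)
  case empty
  then show ?case by simp
next
  case (insert j T)
  let ?a = "card (avoiding \<Omega> A (S \<union> T))" and ?b = "card (A j \<inter> avoiding \<Omega> A (S \<union> T))"
  have IH: "m * card (avoiding \<Omega> A S) \<le> m * ?a + 2 * card T * card (avoiding \<Omega> A S)"
    using insert.IH insert.prems by blast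
  have "?a = card (avoiding \<Omega> A (S \<union> insert j T)) + ?b"
    using card_avoiding_insert[OF \<open>finite \<Omega>\<close>, of A "S \<union> T" j] by simp
  hence split: "m * ?a = m * card (avoiding \<Omega> A (S \<union> insert j T)) + m * ?b"
    by (simp add: algebra_simps)
  have "m * ?b \<le> 2 * ?a"
    using insert.prems[of T j] insert.hyps by (simp add: mult.commute subset_insertI)
  also have "?a \<le> card (avoiding \<Omega> A S)"
    using \<open>finite \<Omega>\<close> by (intro card_mono finite_avoiding avoiding_antimono) auto
  finally show ?case
    using IH split insert.hyps by simp
qed

text \<open>Probabilities are counts in \<open>\<Omega>\<close>, and the bound \<open>p\<close> of the lopsided local lemma appears as
  \<open>1 / m\<close>, which keeps all estimates in \<open>nat\<close>. The neighbours of \<open>i\<close> in \<open>S\<close> shrink the set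
  avoiding the rest of \<open>S\<close> by at most half, and \<open>A i\<close> is rare in the latter by hypothesis.\<close>

lemma lopsided_local_lemma_conditional:
  fixes \<Omega> :: "'s set" and I :: "'e set" and A :: "'e \<Rightarrow> 's set" and N :: "'e \<Rightarrow> 'e set"
  assumes "finite \<Omega>" and "finite I"
    and degree: "\<And>i. i \<in> I \<Longrightarrow> card (N i \<inter> I) \<le> d"
    and lopsided: "\<And>i S. i \<in> I \<Longrightarrow> S \<subseteq> I \<Longrightarrow> i \<notin> S \<Longrightarrow> S \<inter> N i = {} \<Longrightarrow>
        card (A i \<inter> avoiding \<Omega> A S) * m \<le> card (avoiding \<Omega> A S)"
    and "4 * d \<le> m"
  shows "S \<subseteq> I \<Longrightarrow> i \<in> I \<Longrightarrow> i \<notin> S \<Longrightarrow>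
     card (A i \<inter> avoiding \<Omega> A S) * m \<le> 2 * card (avoiding \<Omega> A S)"
proof (induction "card S" arbitrary: S i rule: less_induct)
  case less
  define near where "near = S \<inter> N i"
  define far where "far = S - N i"
  have "finite S" using less.prems(1) \<open>finite I\<close> by (rule finite_subset)
  have S_eq: "S = far \<union> near" unfolding near_def far_def by auto
  have shrink: "m * card (avoiding \<Omega> A far)
      \<le> m * card (avoiding \<Omega> A S) + 2 * card near * card (avoiding \<Omega> A far)"
    unfolding S_eq
  proof (rule card_avoiding_union[OF \<open>finite \<Omega>\<close>])
    show "finite near" unfolding near_def using \<open>finite S\<close> by simp
    fix j T' assume "T' \<subseteq> near" "j \<in> near" "j \<notin> T'"
    moreover have "card (far \<union> T') < card S"
      using \<open>finite S\<close> \<open>T' \<subseteq> near\<close> \<open>j \<in> near\<close> \<open>j \<notin> T'\<close>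
      unfolding near_def far_def by (intro psubset_card_mono) auto
    ultimately show "card (A j \<inter> avoiding \<Omega> A (far \<union> T')) * m \<le> 2 * card (avoiding \<Omega> A (far \<union> T'))"
      using less.prems(1) by (intro less.hyps) (auto simp: near_def far_def)
  qed
  have "card near \<le> card (N i \<inter> I)"
    using less.prems(1) \<open>finite I\<close> unfolding near_def by (intro card_mono) auto
  hence "4 * card near \<le> m" using degree[OF less.prems(2)] \<open>4 * d \<le> m\<close> by linarith
  hence "4 * card near * card (avoiding \<Omega> A far) \<le> m * card (avoiding \<Omega> A far)"
    by (rule mult_right_mono) simp
  hence "m * card (avoiding \<Omega> A far) \<le> 2 * (m * card (avoiding \<Omega> A S))"
    using shrink by linarith
  hence far_le: "0 < m \<Longrightarrow> card (avoiding \<Omega> A far) \<le> 2 * card (avoiding \<Omega> A S)"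
    by (simp add: algebra_simps)
  have "card (A i \<inter> avoiding \<Omega> A S) \<le> card (A i \<inter> avoiding \<Omega> A far)"
    using \<open>finite \<Omega>\<close> by (intro card_mono) (auto simp: finite_avoiding avoiding_def far_def)
  hence "card (A i \<inter> avoiding \<Omega> A S) * m \<le> card (A i \<inter> avoiding \<Omega> A far) * m"
    by simp
  also have "\<dots> \<le> card (avoiding \<Omega> A far)"
    using less.prems by (intro lopsided) (auto simp: far_def)
  finally show ?case using far_le by (cases "m = 0") auto
qed

lemma lopsided_local_lemma:
  fixes \<Omega> :: "'s set" and I :: "'e set" and A :: "'e \<Rightarrow> 's set" and N :: "'e \<Rightarrow> 'e set"
  assumes "finite \<Omega>" and "\<Omega> \<noteq> {}" and "finite I"
    and degree: "\<And>i. i \<in> I \<Longrightarrow> card (N i \<inter> I) \<le> d"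
    and lopsided: "\<And>i S. i \<in> I \<Longrightarrow> S \<subseteq> I \<Longrightarrow> i \<notin> S \<Longrightarrow> S \<inter> N i = {} \<Longrightarrow>
        card (A i \<inter> avoiding \<Omega> A S) * m \<le> card (avoiding \<Omega> A S)"
    and "4 * d \<le> m" and "2 < m"
  shows "\<exists>s\<in>\<Omega>. \<forall>i\<in>I. s \<notin> A i"
proof -
  have "avoiding \<Omega> A T \<noteq> {}" if "T \<subseteq> I" for T
    using finite_subset[OF that \<open>finite I\<close>] that
  proof (induction T rule: finite_induct)
    case empty
    then show ?case using \<open>\<Omega> \<noteq> {}\<close> by (simp add: avoiding_def)
  next
    case (insert j T)
    let ?a = "card (avoiding \<Omega> A T)" and ?b = "card (A j \<inter> avoiding \<Omega> A T)"
    have "0 < ?a"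
      using insert \<open>finite \<Omega>\<close> by (simp add: card_gt_0_iff finite_avoiding)
    moreover have "?b * m \<le> 2 * ?a"
      using insert by (intro lopsided_local_lemma_conditional[OF \<open>finite \<Omega>\<close> \<open>finite I\<close> degree lopsided \<open>4 * d \<le> m\<close>]) auto
    moreover have "2 * ?a < m * ?a" using \<open>0 < ?a\<close> \<open>2 < m\<close> by simp
    ultimately have "?b * m < ?a * m" by (metis le_less_trans mult.commute)
    hence "?b < ?a" by simp
    then show ?case
      using card_avoiding_insert[OF \<open>finite \<Omega>\<close>, of A T j] by auto
  qed
  from this[of I] show ?thesis unfolding avoiding_def by auto
qed

section \<open>Sequencings and placement events\<close>

text \<open>Sequencings are taken extensional, so that they form a finite set and composites with
  permutations can be compared as functions.\<close>

definition sequencings :: "'a set \<Rightarrow> (nat \<Rightarrow> 'a) set" where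
  "sequencings X = {\<phi> \<in> {0..<card X} \<rightarrow>\<^sub>E X. bij_betw \<phi> {0..<card X} X}"

definition window :: "nat \<Rightarrow> nat \<Rightarrow> nat \<Rightarrow> nat set" where
  "window n l i = {(i + j) mod n | j. j < l}"

definition placements :: "nat \<Rightarrow> nat \<Rightarrow> 'a set \<Rightarrow> ('a \<Rightarrow> nat) set" where
  "placements n l b = {g \<in> b \<rightarrow>\<^sub>E {0..<n}. inj_on g b \<and> (\<exists>i<n. g ` b \<subseteq> window n l i)}"

definition placing :: "'a set \<Rightarrow> 'a set \<times> ('a \<Rightarrow> nat) \<Rightarrow> (nat \<Rightarrow> 'a) set" where
  "placing X e = {\<phi> \<in> sequencings X. \<forall>x\<in>fst e. \<phi> (snd e x) = x}"

definition conflicting :: "'a set \<times> ('a \<Rightarrow> nat) \<Rightarrow> ('a set \<times> ('a \<Rightarrow> nat)) set" where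
  "conflicting e = {e'. \<exists>x\<in>fst e. \<exists>x'\<in>fst e'. (snd e x = snd e' x') \<noteq> (x = x')}"

lemma finite_sequencings: "finite X \<Longrightarrow> finite (sequencings X)"
  unfolding sequencings_def
  by (rule finite_subset[of _ "{0..<card X} \<rightarrow>\<^sub>E X"]) (auto intro: finite_PiE)

lemma sequencings_nonempty: "finite X \<Longrightarrow> sequencings X \<noteq> {}"
proof -
  assume "finite X"
  then obtain h where h: "bij_betw h {0..<card X} X" using ex_bij_betw_nat_finite by blast
  moreover have "bij_betw (restrict h {0..<card X}) {0..<card X} X = bij_betw h {0..<card X} X"
    by (rule bij_betw_cong) simp
  ultimately have "restrict h {0..<card X} \<in> sequencings X"
    unfolding sequencings_def using bij_betwE by fastforce
  thus ?thesis by blast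
qed

lemma extend_inj_on_to_permutation:
  assumes "finite X" and "b \<subseteq> X" and "inj_on \<rho> b" and "\<rho> ` b \<subseteq> X"
  obtains \<pi> where "bij_betw \<pi> X X" and "\<And>x. x \<in> b \<Longrightarrow> \<pi> x = \<rho> x"
    and "\<And>y. y \<in> X - b \<Longrightarrow> \<pi> y \<notin> b \<Longrightarrow> \<pi> y = y"
proof -
  define F where "F = \<rho> ` b"
  have "finite b" using assms(1,2) by (rule finite_subset[rotated])
  hence "card (F - b) = card (b - F)"
    using card_image[OF \<open>inj_on \<rho> b\<close>] by (simp add: F_def card_Diff_subset_Int Int_commute)
  then obtain h where h: "bij_betw h (F - b) (b - F)"
    using \<open>finite b\<close> by (metis F_def finite_Diff finite_imageI finite_same_card_bij)
  define \<pi> where "\<pi> y = (if y \<in> b then \<rho> y else if y \<in> F then h y else y)" for y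
  have "bij_betw \<pi> (b \<union> (F - b) \<union> (X - (b \<union> F))) (F \<union> (b - F) \<union> (X - (b \<union> F)))"
  proof (intro bij_betw_combine)
    have "bij_betw \<rho> b F"
      using \<open>inj_on \<rho> b\<close> unfolding F_def by (rule inj_on_imp_bij_betw)
    thus "bij_betw \<pi> b F"
      by (rule bij_betw_cong[THEN iffD1, rotated]) (simp add: \<pi>_def)
    show "bij_betw \<pi> (F - b) (b - F)"
      using h by (rule bij_betw_cong[THEN iffD1, rotated]) (simp add: \<pi>_def)
    show "bij_betw \<pi> (X - (b \<union> F)) (X - (b \<union> F))"
      using bij_betw_id by (rule bij_betw_cong[THEN iffD1, rotated]) (simp add: \<pi>_def)
  qed blast+
  moreover have "b \<union> (F - b) \<union> (X - (b \<union> F)) = X" "F \<union> (b - F) \<union> (X - (b \<union> F)) = X"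
    using assms(2,4) unfolding F_def by auto
  moreover have "\<pi> y = y" if "y \<in> X - b" "\<pi> y \<notin> b" for y
    using that bij_betwE[OF h] unfolding \<pi>_def by (auto split: if_splits)
  ultimately show ?thesis
    using that[of \<pi>] by (simp add: \<pi>_def)
qed

lemma sequencings_bij_betw: "\<phi> \<in> sequencings X \<Longrightarrow> bij_betw \<phi> {0..<card X} X"
  unfolding sequencings_def by blast

lemma sequencings_undefined: "\<phi> \<in> sequencings X \<Longrightarrow> q \<notin> {0..<card X} \<Longrightarrow> \<phi> q = undefined"
  unfolding sequencings_def by (auto simp: PiE_def extensional_def)

lemma not_conflicting_iff:
  "(b', g') \<notin> conflicting (b, g) \<longleftrightarrow> (\<forall>x\<in>b. \<forall>x'\<in>b'. g x = g' x' \<longleftrightarrow> x = x')"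
  unfolding conflicting_def by auto

section \<open>Negative dependence of placement events\<close>

lemma restrict_comp_sequencings:
  assumes "\<sigma> \<in> sequencings X" and "bij_betw \<pi> X X"
  shows "restrict (\<pi> \<circ> \<sigma>) {0..<card X} \<in> sequencings X"
proof -
  have \<pi>\<sigma>: "bij_betw (\<pi> \<circ> \<sigma>) {0..<card X} X"
    using sequencings_bij_betw[OF assms(1)] assms(2) by (rule bij_betw_trans)
  hence "bij_betw (restrict (\<pi> \<circ> \<sigma>) {0..<card X}) {0..<card X} X"
    by (rule bij_betw_cong[THEN iffD1, rotated]) simp
  moreover have "restrict (\<pi> \<circ> \<sigma>) {0..<card X} \<in> {0..<card X} \<rightarrow>\<^sub>E X"
    using bij_betw_imp_funcset[OF \<pi>\<sigma>] by simp
  ultimately show ?thesis unfolding sequencings_def by blast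
qed

text \<open>Under \<open>\<sigma>\<close>, a position of \<open>b'\<close> outside \<open>g ` b\<close> holds a vertex outside \<open>b\<close>; \<open>\<pi>\<close> either fixes it
  or moves it into \<open>b\<close>, and \<open>(b', g')\<close> puts no vertex of \<open>b\<close> there.\<close>

lemma placing_if_permuted_placing:
  assumes \<sigma>: "\<sigma> \<in> placing X (b, g)"
    and fixes_outside: "\<And>y. y \<in> X - b \<Longrightarrow> \<pi> y \<notin> b \<Longrightarrow> \<pi> y = y"
    and g: "g ` b \<subseteq> {0..<card X}" and "(b', g') \<notin> conflicting (b, g)"
    and \<pi>\<sigma>: "restrict (\<pi> \<circ> \<sigma>) {0..<card X} \<in> placing X (b', g')"
  shows "\<sigma> \<in> placing X (b', g')"
proof -
  define P where "P = {0..<card X}"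
  have \<sigma>_seq: "\<sigma> \<in> sequencings X" and \<sigma>_b: "\<And>x. x \<in> b \<Longrightarrow> \<sigma> (g x) = x"
    using \<sigma> unfolding placing_def by auto
  have \<sigma>_bij: "bij_betw \<sigma> P X" using sequencings_bij_betw[OF \<sigma>_seq] unfolding P_def .
  have no_conflict: "\<And>x x'. x \<in> b \<Longrightarrow> x' \<in> b' \<Longrightarrow> g x = g' x' \<longleftrightarrow> x = x'"
    using \<open>(b', g') \<notin> conflicting (b, g)\<close> unfolding not_conflicting_iff by blast
  have "\<sigma> (g' x') = x'" if "x' \<in> b'" for x'
  proof -
    have \<pi>\<sigma>_x': "restrict (\<pi> \<circ> \<sigma>) P (g' x') = x'" using \<pi>\<sigma> that unfolding placing_def P_def by auto
    consider "g' x' \<notin> P" | "g' x' \<in> g ` b" | "g' x' \<in> P - g ` b" by blast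
    then show ?thesis
    proof cases
      case 1
      then show ?thesis using \<pi>\<sigma>_x' sequencings_undefined[OF \<sigma>_seq] unfolding P_def by auto
    next
      case 2
      then obtain x where x: "x \<in> b" "g x = g' x'" by auto
      hence "x = x'" using no_conflict[OF x(1) that] by simp
      then show ?thesis using \<sigma>_b[OF x(1)] x(2) by simp
    next
      case 3
      define y where "y = \<sigma> (g' x')"
      have "y \<in> X" unfolding y_def using \<sigma>_bij 3 bij_betwE by blast
      moreover have "y \<notin> b"
      proof
        assume "y \<in> b"
        hence "\<sigma> (g y) = \<sigma> (g' x')" and "g y \<in> P" using \<sigma>_b g unfolding y_def P_def by auto
        hence "g y = g' x'" using \<sigma>_bij 3 unfolding bij_betw_def by (auto dest: inj_onD)
        thus False using 3 \<open>y \<in> b\<close> by (metis DiffD2 image_eqI)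
      qed
      moreover have "x' \<notin> b" using no_conflict[OF _ that] 3 by (metis DiffD2 image_eqI)
      moreover have "\<pi> y = x'" using \<pi>\<sigma>_x' 3 unfolding y_def by simp
      ultimately show ?thesis using fixes_outside[of y] unfolding y_def by auto
    qed
  qed
  thus ?thesis using \<sigma>_seq unfolding placing_def by simp
qed

lemma permute_placing_avoiding:
  assumes \<sigma>: "\<sigma> \<in> placing X (b, g) \<inter> avoiding (sequencings X) (placing X) S"
    and "bij_betw \<pi> X X" and "\<And>y. y \<in> X - b \<Longrightarrow> \<pi> y \<notin> b \<Longrightarrow> \<pi> y = y"
    and "g ` b \<subseteq> {0..<card X}" and S: "S \<inter> conflicting (b, g) = {}"
  shows "restrict (\<pi> \<circ> \<sigma>) {0..<card X} \<in> avoiding (sequencings X) (placing X) S"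
proof -
  have "restrict (\<pi> \<circ> \<sigma>) {0..<card X} \<notin> placing X (b', g')" if "(b', g') \<in> S" for b' g'
  proof
    assume "restrict (\<pi> \<circ> \<sigma>) {0..<card X} \<in> placing X (b', g')"
    moreover have "(b', g') \<notin> conflicting (b, g)" using S that by blast
    ultimately have "\<sigma> \<in> placing X (b', g')"
      using placing_if_permuted_placing[OF IntD1[OF \<sigma>] assms(3,4)] by blast
    thus False using \<sigma> that unfolding avoiding_def by auto
  qed
  moreover have "restrict (\<pi> \<circ> \<sigma>) {0..<card X} \<in> sequencings X"
    using \<sigma> \<open>bij_betw \<pi> X X\<close> unfolding placing_def by (intro restrict_comp_sequencings) auto
  ultimately show ?thesis unfolding avoiding_def by auto
qed

text \<open>A sequencing in the event and the injection \<open>f\<close> it is composed with are both recovered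
  from the composite: \<open>f\<close> from its values on \<open>g ` b\<close>, then the sequencing by cancelling \<open>perm f\<close>.\<close>

lemma inj_on_permute_placing:
  assumes perm_bij: "\<And>f. f \<in> F \<Longrightarrow> bij_betw (perm f) X X"
    and perm_b: "\<And>f x. f \<in> F \<Longrightarrow> x \<in> b \<Longrightarrow> perm f x = f (g x)"
    and "F \<subseteq> g ` b \<rightarrow>\<^sub>E X" and g: "g ` b \<subseteq> {0..<card X}"
  shows "inj_on (\<lambda>(\<sigma>, f). restrict (perm f \<circ> \<sigma>) {0..<card X}) (placing X (b, g) \<times> F)"
proof (rule inj_onI)
  fix u v
  assume "u \<in> placing X (b, g) \<times> F" "v \<in> placing X (b, g) \<times> F"
    and "(\<lambda>(\<sigma>, f). restrict (perm f \<circ> \<sigma>) {0..<card X}) u = (\<lambda>(\<sigma>, f). restrict (perm f \<circ> \<sigma>) {0..<card X}) v"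
  then obtain \<sigma>1 f1 \<sigma>2 f2 where u: "u = (\<sigma>1, f1)" and v: "v = (\<sigma>2, f2)"
    and 1: "\<sigma>1 \<in> placing X (b, g)" "f1 \<in> F" and 2: "\<sigma>2 \<in> placing X (b, g)" "f2 \<in> F"
    and eq: "restrict (perm f1 \<circ> \<sigma>1) {0..<card X} = restrict (perm f2 \<circ> \<sigma>2) {0..<card X}"
    by auto
  have same: "perm f1 (\<sigma>1 q) = perm f2 (\<sigma>2 q)" if "q < card X" for q
    using fun_cong[OF eq, of q] that by simp
  have fg: "f1 (g x) = f2 (g x)" if "x \<in> b" for x
  proof -
    have "\<sigma>1 (g x) = x" "\<sigma>2 (g x) = x" using 1(1) 2(1) that unfolding placing_def by auto
    moreover have "g x < card X" using g that by auto
    ultimately show ?thesis using same[of "g x"] perm_b[OF 1(2) that] perm_b[OF 2(2) that] by simp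
  qed
  have "f1 \<in> g ` b \<rightarrow>\<^sub>E X" "f2 \<in> g ` b \<rightarrow>\<^sub>E X" using 1(2) 2(2) \<open>F \<subseteq> g ` b \<rightarrow>\<^sub>E X\<close> by auto
  hence "f1 = f2" by (rule PiE_ext) (use fg in blast)
  have seq: "\<sigma>1 \<in> sequencings X" "\<sigma>2 \<in> sequencings X" using 1(1) 2(1) unfolding placing_def by auto
  have "\<sigma>1 = \<sigma>2"
  proof
    fix q show "\<sigma>1 q = \<sigma>2 q"
    proof (cases "q < card X")
      case True
      hence "\<sigma>1 q \<in> X" "\<sigma>2 q \<in> X"
        using bij_betwE[OF sequencings_bij_betw[OF seq(1)]] bij_betwE[OF sequencings_bij_betw[OF seq(2)]]
        by auto
      moreover have "inj_on (perm f1) X" using perm_bij[OF 1(2)] unfolding bij_betw_def ..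
      ultimately show ?thesis using same[OF True] \<open>f1 = f2\<close> by (auto dest: inj_onD)
    next
      case False
      then show ?thesis using sequencings_undefined[OF seq(1)] sequencings_undefined[OF seq(2)] by simp
    qed
  qed
  thus "u = v" using u v \<open>f1 = f2\<close> by simp
qed

lemma card_placing_avoiding:
  assumes "finite X" and "b \<subseteq> X" and "inj_on g b" and g: "g ` b \<subseteq> {0..<card X}"
    and S: "S \<inter> conflicting (b, g) = {}"
  shows "card (placing X (b, g) \<inter> avoiding (sequencings X) (placing X) S) * (\<Prod>i<card b. card X - i)
    \<le> card (avoiding (sequencings X) (placing X) S)"
proof -
  define L where "L = placing X (b, g) \<inter> avoiding (sequencings X) (placing X) S"
  define F where "F = {f \<in> g ` b \<rightarrow>\<^sub>E X. inj_on f (g ` b)}"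
  have "\<exists>\<pi>. bij_betw \<pi> X X \<and> (\<forall>x\<in>b. \<pi> x = f (g x)) \<and> (\<forall>y\<in>X - b. \<pi> y \<notin> b \<longrightarrow> \<pi> y = y)"
    if "f \<in> F" for f
  proof -
    have "inj_on (f \<circ> g) b" and "(f \<circ> g) ` b \<subseteq> X"
      using that \<open>inj_on g b\<close> unfolding F_def by (auto intro: comp_inj_on)
    then obtain \<pi> where "bij_betw \<pi> X X" "\<And>x. x \<in> b \<Longrightarrow> \<pi> x = (f \<circ> g) x"
      "\<And>y. y \<in> X - b \<Longrightarrow> \<pi> y \<notin> b \<Longrightarrow> \<pi> y = y"
      using extend_inj_on_to_permutation[OF \<open>finite X\<close> \<open>b \<subseteq> X\<close>] by blast
    then show ?thesis by auto
  qed
  then obtain perm where "\<And>f. f \<in> F \<Longrightarrow> bij_betw (perm f) X X \<and> (\<forall>x\<in>b. perm f x = f (g x))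
      \<and> (\<forall>y\<in>X - b. perm f y \<notin> b \<longrightarrow> perm f y = y)"
    by metis
  hence perm_bij: "\<And>f. f \<in> F \<Longrightarrow> bij_betw (perm f) X X"
    and perm_b: "\<And>f x. f \<in> F \<Longrightarrow> x \<in> b \<Longrightarrow> perm f x = f (g x)"
    and perm_fix: "\<And>f y. f \<in> F \<Longrightarrow> y \<in> X - b \<Longrightarrow> perm f y \<notin> b \<Longrightarrow> perm f y = y"
    by auto
  let ?\<Psi> = "\<lambda>(\<sigma>, f). restrict (perm f \<circ> \<sigma>) {0..<card X}"
  have "inj_on ?\<Psi> (L \<times> F)"
    using inj_on_permute_placing[OF perm_bij perm_b _ g, of F] unfolding L_def F_def
    by (rule inj_on_subset) auto
  moreover have "?\<Psi> ` (L \<times> F) \<subseteq> avoiding (sequencings X) (placing X) S"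
    unfolding L_def by (auto intro!: permute_placing_avoiding[OF _ perm_bij perm_fix g S])
  moreover have "finite (avoiding (sequencings X) (placing X) S)"
    using \<open>finite X\<close> by (intro finite_avoiding finite_sequencings)
  ultimately have "card (L \<times> F) \<le> card (avoiding (sequencings X) (placing X) S)"
    by (intro card_inj_on_le)
  moreover have "card F = (\<Prod>i<card b. card X - i)"
    using card_inj_on_subset_funcset[of "g ` b" X "g ` b"] card_image[OF \<open>inj_on g b\<close>]
      \<open>finite X\<close> finite_subset[OF \<open>b \<subseteq> X\<close>]
    unfolding F_def by (simp add: atLeast0LessThan)
  ultimately show ?thesis unfolding L_def by (simp add: card_cartesian_product)
qed

lemma cyc_window_eq_image: "cyc_window n \<phi> i l = \<phi> ` window n l i"
  unfolding cyc_window_def window_def by auto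

lemma window_subset: "0 < n \<Longrightarrow> window n l i \<subseteq> {0..<n}"
  unfolding window_def by auto

lemma cyclically_good_if_avoiding:
  assumes \<phi>: "\<phi> \<in> sequencings X"
    and avoids: "\<And>e. e \<in> Sigma \<B> (placements (card X) l) \<Longrightarrow> \<phi> \<notin> placing X e"
  shows "cyclically_good X \<B> l \<phi>"
proof -
  define n where "n = card X"
  have bij: "bij_betw \<phi> {0..<n} X" using sequencings_bij_betw[OF \<phi>] unfolding n_def .
  have "\<not> b \<subseteq> \<phi> ` window n l i" if "i < n" "b \<in> \<B>" for i b
  proof
    assume b: "b \<subseteq> \<phi> ` window n l i"
    have W: "window n l i \<subseteq> {0..<n}" using \<open>i < n\<close> by (intro window_subset) simp
    define g where "g = restrict (inv_into {0..<n} \<phi>) b"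
    have g: "g x \<in> window n l i \<and> \<phi> (g x) = x" if "x \<in> b" for x
    proof -
      obtain q where "q \<in> window n l i" "x = \<phi> q" using b \<open>x \<in> b\<close> by auto
      moreover have "inv_into {0..<n} \<phi> (\<phi> q) = q"
        using bij W \<open>q \<in> window n l i\<close> by (auto simp: bij_betw_def inv_into_f_f)
      ultimately show ?thesis using \<open>x \<in> b\<close> unfolding g_def by simp
    qed
    have "g \<in> placements n l b"
      unfolding placements_def
    proof (intro CollectI conjI)
      show "g \<in> b \<rightarrow>\<^sub>E {0..<n}" using g W unfolding g_def by auto
      show "inj_on g b" by (rule inj_on_inverseI[of _ \<phi>]) (use g in blast)
      show "\<exists>i<n. g ` b \<subseteq> window n l i" using g \<open>i < n\<close> by blast
    qed
    moreover have "\<phi> \<in> placing X (b, g)" using \<phi> g unfolding placing_def by simp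
    ultimately show False using avoids \<open>b \<in> \<B>\<close> unfolding n_def by blast
  qed
  thus ?thesis
    using bij unfolding cyclically_good_def sequencing_def independent_set_def cyc_window_eq_image n_def
    by blast
qed

section \<open>Counting conflicting placements\<close>

lemma partial_STS_finite_blocks: "partial_STS X \<B> \<Longrightarrow> finite \<B>"
  unfolding partial_STS_def by (metis Pow_iff finite_Pow_iff finite_subset subsetI)

lemma partial_STS_block: "partial_STS X \<B> \<Longrightarrow> b \<in> \<B> \<Longrightarrow> b \<subseteq> X \<and> card b = 3"
  unfolding partial_STS_def by blast

lemma partial_STS_block_unique:
  assumes "partial_STS X \<B>" and "b1 \<in> \<B>" "b2 \<in> \<B>" and "{y, z} \<subseteq> b1" "{y, z} \<subseteq> b2" and "y \<noteq> z"
  shows "b1 = b2"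
proof -
  have "{y, z} \<subseteq> X" using assms(2,4) partial_STS_block[OF assms(1)] by blast
  moreover have "card {y, z} = 2" using \<open>y \<noteq> z\<close> by simp
  ultimately have "card {b\<in>\<B>. {y, z} \<subseteq> b} \<le> 1"
    using assms(1) unfolding partial_STS_def by blast
  moreover have "finite {b\<in>\<B>. {y, z} \<subseteq> b}" using partial_STS_finite_blocks[OF assms(1)] by simp
  ultimately show ?thesis using assms(2-5) by (auto simp: card_le_Suc0_iff_eq)
qed

lemma card_blocks_containing_le:
  assumes "partial_STS X \<B>" and "y \<in> X"
  shows "card {b\<in>\<B>. y \<in> b} \<le> card X - 1"
proof -
  define other where "other b = (SOME z. z \<in> b - {y})" for b
  have other: "other b \<in> b - {y}" if "b \<in> \<B>" for b
  proof -
    have "\<not> b \<subseteq> {y}"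
      using card_mono[of "{y}" b] partial_STS_block[OF assms(1) that] by auto
    thus ?thesis unfolding other_def by (metis Diff_eq_empty_iff some_in_eq)
  qed
  have "inj_on other {b\<in>\<B>. y \<in> b}"
  proof (rule inj_onI)
    fix b1 b2 assume b1: "b1 \<in> {b\<in>\<B>. y \<in> b}" and b2: "b2 \<in> {b\<in>\<B>. y \<in> b}"
      and "other b1 = other b2"
    with other[of b1] other[of b2]
    have "{y, other b1} \<subseteq> b1" "{y, other b1} \<subseteq> b2" "y \<noteq> other b1" by auto
    with b1 b2 show "b1 = b2" by (intro partial_STS_block_unique[OF assms(1)]) auto
  qed
  moreover have "other ` {b\<in>\<B>. y \<in> b} \<subseteq> X - {y}"
    using other partial_STS_block[OF assms(1)] by blast
  moreover have "finite X" using assms unfolding partial_STS_def by blast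
  ultimately have "card {b\<in>\<B>. y \<in> b} \<le> card (X - {y})"
    by (intro card_inj_on_le) auto
  also have "\<dots> = card X - 1" using \<open>y \<in> X\<close> \<open>finite X\<close> by simp
  finally show ?thesis .
qed

lemma card_window_le: "card (window n l i) \<le> l"
proof -
  have "window n l i = (\<lambda>j. (i + j) mod n) ` {..<l}" unfolding window_def by auto
  thus ?thesis using card_image_le[of "{..<l}" "\<lambda>j. (i + j) mod n"] by simp
qed

lemma window_subset_window_around:
  assumes "l \<le> n" and "Q \<in> window n l i"
  shows "window n l i \<subseteq> window n (2 * l - 1) (Q + n - (l - 1))"
proof
  fix R assume "R \<in> window n l i"
  then obtain c where c: "c < l" "R = (i + c) mod n" unfolding window_def by auto
  obtain a where a: "a < l" "Q = (i + a) mod n" using assms(2) unfolding window_def by auto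
  define k where "k = c + (l - 1) - a"
  have "Q + n - (l - 1) + k = Q + (n + c - a)" unfolding k_def using a c assms(1) by auto
  hence "(Q + n - (l - 1) + k) mod n = (i + a + (n + c - a)) mod n"
    using a by (simp add: mod_add_left_eq)
  also have "i + a + (n + c - a) = (i + c) + n" using a c assms(1) by auto
  finally have "(Q + n - (l - 1) + k) mod n = R" using c by simp
  moreover have "k < 2 * l - 1" unfolding k_def using a c by auto
  ultimately show "R \<in> window n (2 * l - 1) (Q + n - (l - 1))" unfolding window_def by blast
qed

lemma finite_placements: "finite b \<Longrightarrow> finite (placements n l b)"
  unfolding placements_def by (rule finite_subset[of _ "b \<rightarrow>\<^sub>E {0..<n}"]) (auto intro: finite_PiE)

lemma card_placements_fixing_le:
  assumes "finite b" and "y \<in> b" and "1 \<le> l" and "l \<le> n"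
  shows "card {g \<in> placements n l b. g y = Q} \<le> (2 * l - 1) ^ (card b - 1)"
proof -
  define W where "W = window n (2 * l - 1) (Q + n - (l - 1))"
  define T where "T z = (if z = y then {Q} else W)" for z
  have "{g \<in> placements n l b. g y = Q} \<subseteq> Pi\<^sub>E b T"
  proof
    fix g assume "g \<in> {g \<in> placements n l b. g y = Q}"
    then obtain i where "g \<in> b \<rightarrow>\<^sub>E {0..<n}" "g ` b \<subseteq> window n l i" "g y = Q"
      unfolding placements_def by auto
    moreover from this have "g ` b \<subseteq> W"
      using window_subset_window_around[OF \<open>l \<le> n\<close>] \<open>y \<in> b\<close> unfolding W_def by blast
    ultimately show "g \<in> Pi\<^sub>E b T" unfolding T_def by (auto simp: PiE_def)
  qed
  moreover have "finite (Pi\<^sub>E b T)"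
    using \<open>finite b\<close> unfolding T_def W_def window_def by (intro finite_PiE) auto
  ultimately have "card {g \<in> placements n l b. g y = Q} \<le> card (Pi\<^sub>E b T)"
    by (rule card_mono[rotated])
  also have "\<dots> = card (T y) * (\<Prod>z\<in>b - {y}. card (T z))"
    using \<open>finite b\<close> \<open>y \<in> b\<close> by (simp add: card_PiE prod.remove)
  also have "\<dots> = card W ^ (card b - 1)"
    using \<open>finite b\<close> \<open>y \<in> b\<close> unfolding T_def by simp
  also have "\<dots> \<le> (2 * l - 1) ^ (card b - 1)"
    unfolding W_def by (intro power_mono card_window_le) simp
  finally show ?thesis .
qed

lemma partial_STS_finite_block: "partial_STS X \<B> \<Longrightarrow> b \<in> \<B> \<Longrightarrow> finite b"
  using partial_STS_block[of X \<B> b] by (intro card_ge_0_finite) simp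

lemma finite_placement_events:
  assumes "partial_STS X \<B>"
  shows "finite (Sigma \<B> (placements n l))"
  using partial_STS_finite_blocks[OF assms] partial_STS_finite_block[OF assms]
  by (intro finite_SigmaI finite_placements)

lemma card_UN_le_card_mult:
  "finite I \<Longrightarrow> (\<And>i. i \<in> I \<Longrightarrow> card (A i) \<le> m) \<Longrightarrow> card (\<Union>i\<in>I. A i) \<le> card I * m"
  using card_UN_le[of I A] sum_bounded_above[of I "\<lambda>i. card (A i)" m] by simp

lemma card_placements_through_le:
  assumes "partial_STS X \<B>" and "y \<in> X" and "1 \<le> l" and "l \<le> card X"
  shows "card (Sigma {b\<in>\<B>. y \<in> b} (\<lambda>b. {g \<in> placements (card X) l b. g y = Q}))
    \<le> (card X - 1) * (2 * l - 1)^2"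
proof -
  have "card {g \<in> placements (card X) l b. g y = Q} \<le> (2 * l - 1)^2" if "b \<in> \<B>" "y \<in> b" for b
  proof -
    have "card b - 1 = 2" using partial_STS_block[OF assms(1) that(1)] by simp
    thus ?thesis
      using card_placements_fixing_le[OF partial_STS_finite_block[OF assms(1) that(1)] that(2) assms(3,4)]
      by simp
  qed
  moreover have "finite {b\<in>\<B>. y \<in> b}" using partial_STS_finite_blocks[OF assms(1)] by simp
  moreover have "finite {g \<in> placements (card X) l b. g y = Q}" if "b \<in> \<B>" for b
    using finite_placements[OF partial_STS_finite_block[OF assms(1) that]] by simp
  ultimately have "card (Sigma {b\<in>\<B>. y \<in> b} (\<lambda>b. {g \<in> placements (card X) l b. g y = Q}))
      \<le> card {b\<in>\<B>. y \<in> b} * (2 * l - 1)^2"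
    using sum_bounded_above[of "{b\<in>\<B>. y \<in> b}" "\<lambda>b. card {g \<in> placements (card X) l b. g y = Q}"]
    by (simp add: card_SigmaI)
  also have "\<dots> \<le> (card X - 1) * (2 * l - 1)^2"
    using card_blocks_containing_le[OF assms(1,2)] by simp
  finally show ?thesis .
qed

lemma card_conflicting_le:
  assumes "partial_STS X \<B>" and "b \<in> \<B>" and "1 \<le> l" and "l \<le> card X"
  shows "card (conflicting (b, g) \<inter> Sigma \<B> (placements (card X) l))
    \<le> 6 * card X * (card X - 1) * (2 * l - 1)^2"
proof -
  define n where "n = card X"
  define I where "I = Sigma \<B> (placements n l)"
  define E where "E y Q = Sigma {b\<in>\<B>. y \<in> b} (\<lambda>b. {g \<in> placements n l b. g y = Q})" for y Q
  define M where "M = n * ((n - 1) * (2 * l - 1)^2)"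
  have "b \<subseteq> X" "card b = 3" "finite X"
    using partial_STS_block[OF assms(1,2)] assms(1) unfolding partial_STS_def by auto
  have E_le: "card (E y Q) \<le> (n - 1) * (2 * l - 1)^2" if "y \<in> X" for y Q
    using card_placements_through_le[OF assms(1) that assms(3,4)] unfolding E_def n_def .
  have "conflicting (b, g) \<inter> I \<subseteq> (\<Union>x\<in>b. \<Union>Q\<in>{0..<n}. E x Q) \<union> (\<Union>Q\<in>g ` b. \<Union>y\<in>X. E y Q)"
  proof clarify
    fix b' g' assume "(b', g') \<in> conflicting (b, g)" "(b', g') \<in> I"
      and "(b', g') \<notin> (\<Union>Q\<in>g ` b. \<Union>y\<in>X. E y Q)"
    then obtain x x' where "x \<in> b" "x' \<in> b'" "(g x = g' x') \<noteq> (x = x')"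
      and "b' \<in> \<B>" "g' \<in> placements n l b'"
      unfolding conflicting_def I_def by auto
    moreover from this have "x' \<in> X" "g' x' < n"
      using partial_STS_block[OF assms(1)] unfolding placements_def by auto
    ultimately show "(b', g') \<in> (\<Union>x\<in>b. \<Union>Q\<in>{0..<n}. E x Q)"
      using \<open>(b', g') \<notin> (\<Union>Q\<in>g ` b. \<Union>y\<in>X. E y Q)\<close> unfolding E_def
      by (cases "x = x'") force+
  qed
  moreover have "finite ((\<Union>x\<in>b. \<Union>Q\<in>{0..<n}. E x Q) \<union> (\<Union>Q\<in>g ` b. \<Union>y\<in>X. E y Q))"
    using finite_placement_events[OF assms(1)]
    by (rule finite_subset[rotated]) (auto simp: E_def)
  ultimately have "card (conflicting (b, g) \<inter> I)
      \<le> card ((\<Union>x\<in>b. \<Union>Q\<in>{0..<n}. E x Q) \<union> (\<Union>Q\<in>g ` b. \<Union>y\<in>X. E y Q))"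
    by (rule card_mono[rotated])
  also have "\<dots> \<le> card b * (card {0..<n} * ((n - 1) * (2 * l - 1)^2))
      + card (g ` b) * (card X * ((n - 1) * (2 * l - 1)^2))"
    using \<open>b \<subseteq> X\<close> \<open>finite X\<close> E_le
    by (intro card_Un_le[THEN order_trans] add_mono card_UN_le_card_mult)
      (auto intro: finite_subset)
  also have "\<dots> \<le> 3 * M + 3 * M"
    using card_image_le[of b g] \<open>card b = 3\<close> card.infinite
    unfolding M_def n_def by (intro add_mono mult_right_mono) fastforce+
  finally show ?thesis unfolding M_def I_def n_def by simp
qed

lemma card_block_placing_avoiding:
  assumes "partial_STS X \<B>" and "(b, g) \<in> Sigma \<B> (placements (card X) l)"
    and "S \<inter> conflicting (b, g) = {}"
  shows "card (placing X (b, g) \<inter> avoiding (sequencings X) (placing X) S) * (card X * (card X - 1) * (card X - 2))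
    \<le> card (avoiding (sequencings X) (placing X) S)"
proof -
  have "finite X" using assms(1) unfolding partial_STS_def by blast
  have g: "inj_on g b" "g ` b \<subseteq> {0..<card X}" using assms(2) unfolding placements_def by auto
  have b: "b \<subseteq> X" "card b = 3" using partial_STS_block[OF assms(1)] assms(2) by auto
  hence "(\<Prod>i<card b. card X - i) = card X * (card X - 1) * (card X - 2)"
    by (simp add: numeral_3_eq_3 numeral_2_eq_2)
  thus ?thesis using card_placing_avoiding[OF \<open>finite X\<close> b(1) g assms(3)] by simp
qed

lemma cyclically_good_sequencing_exists:
  assumes "partial_STS X \<B>" and "1 \<le> l"
    and degree_condition: "24 * (2 * l - 1)^2 \<le> card X - 2"
  shows "\<exists>\<phi>. cyclically_good X \<B> l \<phi>"
proof -
  define n where "n = card X"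
  define I where "I = Sigma \<B> (placements n l)"
  define d where "d = 6 * n * (n - 1) * (2 * l - 1)^2"
  define m where "m = n * (n - 1) * (n - 2)"
  have "finite X" using assms(1) unfolding partial_STS_def by blast
  have "l \<le> (2 * l - 1)^2"
    using \<open>1 \<le> l\<close> le_square[of "2 * l - 1"] unfolding power2_eq_square by linarith
  hence "l \<le> n" and "24 \<le> n - 2" using degree_condition \<open>1 \<le> l\<close> unfolding n_def by auto
  have "4 * d \<le> m"
    using mult_le_mono2[OF degree_condition[folded n_def], of "n * (n - 1)"]
    unfolding d_def m_def by simp
  have "1 * (n - 2) \<le> m"
    unfolding m_def using \<open>24 \<le> n - 2\<close> by (intro mult_le_mono1) (simp, presburger)
  hence "2 < m" using \<open>24 \<le> n - 2\<close> by simp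
  have "\<exists>\<phi>\<in>sequencings X. \<forall>e\<in>I. \<phi> \<notin> placing X e"
  proof (rule lopsided_local_lemma[OF finite_sequencings sequencings_nonempty _ _ _ \<open>4 * d \<le> m\<close> \<open>2 < m\<close>])
    show "card (conflicting e \<inter> I) \<le> d" if "e \<in> I" for e
      using that card_conflicting_le[OF assms(1) _ \<open>1 \<le> l\<close> \<open>l \<le> n\<close>[unfolded n_def]]
      unfolding I_def d_def n_def by auto
    show "card (placing X e \<inter> avoiding (sequencings X) (placing X) S) * m
      \<le> card (avoiding (sequencings X) (placing X) S)"
      if "e \<in> I" and "S \<inter> conflicting e = {}" for e S
      using that card_block_placing_avoiding[OF assms(1)] unfolding I_def m_def n_def by auto
  qed (use \<open>finite X\<close> finite_placement_events[OF assms(1)] in \<open>simp_all add: I_def\<close>)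
  thus ?thesis using cyclically_good_if_avoiding unfolding I_def n_def by blast
qed

lemma degree_condition_if_le_sqrt:
  fixes l n :: nat
  assumes "1 \<le> l" and l_le: "real l \<le> 0.0908 * sqrt (real n)"
  shows "24 * (2 * l - 1)^2 \<le> n - 2"
proof -
  have "(real l)^2 \<le> (0.0908 * sqrt (real n))^2"
    using l_le by (intro power_mono) auto
  also have "\<dots> = 0.0908^2 * (sqrt (real n))^2"
    by (rule power_mult_distrib)
  also have "\<dots> = 0.00824464 * real n"
    by (simp add: power2_eq_square)
  also have "\<dots> \<le> real n / 121"
    by simp
  finally have l2: "(real l)^2 \<le> real n / 121" .
  moreover have "1 \<le> (real l)^2" using \<open>1 \<le> l\<close> by simp
  ultimately have "121 \<le> real n" by linarith
  have "real (2 * l - 1) \<le> 2 * real l" using \<open>1 \<le> l\<close> by simp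
  hence "real ((2 * l - 1)^2) \<le> 4 * (real l)^2"
    using power_mono[of "real (2 * l - 1)" "2 * real l" 2] by (simp add: power_mult_distrib)
  hence "real (24 * (2 * l - 1)^2) \<le> real n - 2"
    using l2 \<open>121 \<le> real n\<close> by linarith
  thus ?thesis using \<open>121 \<le> real n\<close> by linarith
qed

theorem corollary3:
  fixes X :: "'a set" and \<B> :: "'a set set" and l :: nat
  assumes "partial_STS X \<B>"
    and "l \<ge> 1"
    and "real l \<le> 0.0908 * sqrt (real (card X))"
  shows "\<exists>\<phi>. cyclically_good X \<B> l \<phi>"
  using cyclically_good_sequencing_exists[OF assms(1,2) degree_condition_if_le_sqrt[OF assms(2,3)]] .

end
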